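(* Let $\mathscr{X},\mathscr{Y},\mathscr{Z}$ be real Banach spaces with duals $\mathscr{X}^*,\mathscr{Y}^*,\mathscr{Z}^*$, let $A:\mathscr{X}\to\mathscr{Y}$ and $B:\mathscr{X}\to\mathscr{Z}$ be bounded linear operators with adjoints $A^*,B^*$, let $\mathbf{y}_0\in\mathscr{Y}$ and $\rho>0$. Then $$\inf\{\|\mathbf{y}_0-A\mathbf{x}\|_{\mathscr{Y}}+\rho\|B\mathbf{x}\|_{\mathscr{Z}}:\mathbf{x}\in\mathscr{X}\}=\sup\{|\langle\mathbf{y}_0,\lambda\rangle_{\mathscr{Y}}|:\ \lambda\in\mathscr{Y}^*,\ \mu\in\mathscr{Z}^*,\ \max\{\|\lambda\|_{\mathscr{Y}^*},\|\mu\|_{\mathscr{Z}^*}\}\le1,\ A^*\lambda+\rho B^*\mu=0\}.$$ Moreover, if $p,p'\in(1,+\infty)$ with $1/p+1/p'=1$, then $$\inf\{(\|\mathbf{y}_0-A\mathbf{x}\|^p_{\mathscr{Y}}+\rho\|B\mathbf{x}\|^p_{\mathscr{Z}})^{1/p}:\mathbf{x}\in\mathscr{X}\}=\sup\{|\langle\mathbf{y}_0,\lambda\rangle_{\mathscr{Y}}|:\ \lambda\in\mathscr{Y}^*,\ \mu\in\mathscr{Z}^*,\ (\|\lambda\|^{p'}_{\mathscr{Y}^*}+\|\mu\|^{p'}_{\mathscr{Z}^*})^{1/p'}\le1,\ A^*\lambda+\rho^{1/p}B^*\mu=0\}.$$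
   Context: $\langle\mathbf{y},\lambda\rangle_{\mathscr{Y}}:=\lambda(\mathbf{y})$ for $\mathbf{y}\in\mathscr{Y}$, $\lambda\in\mathscr{Y}^*$. *)

theory Defs
  imports "HOL-Analysis.Analysis"
begin

(* Dual space of a real normed space 'a: bounded linear functionals 'a \<Rightarrow>\<^sub>L real,
  with the operator norm. *)

definition pairing :: "'a::real_normed_vector \<Rightarrow> ('a \<Rightarrow>\<^sub>L real) \<Rightarrow> real" where
  "pairing y l = blinfun_apply l y"

definition adjoint_op :: "('a::real_normed_vector \<Rightarrow>\<^sub>L 'b::real_normed_vector)
    \<Rightarrow> ('b \<Rightarrow>\<^sub>L real) \<Rightarrow> ('a \<Rightarrow>\<^sub>L real)" where
  "adjoint_op T l = l o\<^sub>L T"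

end

(* Write N for the norm on the nonnegative quadrant that combines the two residuals
   (N a b = a + b, resp. the p-norm) and Q (y, z) = N (norm y) (norm z).
   Weak duality: if l o A + m o B = 0 then l y0 = l (y0 - A x) - m (B x), which is bounded
   by N (norm (y0 - A x)) (norm (B x)) as soon as (norm l, norm m) lies in the dual unit ball of N.
   Strong duality: v w = inf_x Q (w - (A x, B x)) is sublinear on Y x Z, so Hahn-Banach yields a
   linear F <= v with F (y0, 0) = v (y0, 0), the infimum. F vanishes on the range of
   x |-> (A x, B x), and its restrictions l, m to the two factors are dual feasible, so the
   supremum is attained and equals the infimum. The weights rho and rho powr (1 / p) are
   absorbed into B. Hahn-Banach itself comes from Zorn's lemma: a minimal sublinear functional
   is linear. *)

theory Submission
  imports Defs
begin

section \<open>Sublinear functionals and the Hahn--Banach theorem\<close>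

definition sublinear :: "('a::real_vector \<Rightarrow> real) \<Rightarrow> bool" where
  "sublinear q \<longleftrightarrow> (\<forall>x y. q (x + y) \<le> q x + q y) \<and> (\<forall>c x. 0 < c \<longrightarrow> q (c *\<^sub>R x) \<le> c * q x)"

lemma sublinear_add_le: "sublinear q \<Longrightarrow> q (x + y) \<le> q x + q y"
  by (simp add: sublinear_def)

lemma sublinear_scaleR_le: "sublinear q \<Longrightarrow> 0 < c \<Longrightarrow> q (c *\<^sub>R x) \<le> c * q x"
  by (simp add: sublinear_def)

lemma sublinear_zero:
  assumes "sublinear q"
  shows "q 0 = 0"
  using sublinear_add_le[OF assms, of 0 0] sublinear_scaleR_le[OF assms, of "1/2" 0] by simp

lemma sublinear_scaleR:
  assumes "sublinear q" "0 \<le> c"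
  shows "q (c *\<^sub>R x) = c * q x"
proof (cases "c = 0")
  case True
  then show ?thesis using sublinear_zero[OF assms(1)] by simp
next
  case False
  with assms(2) have c: "0 < c" by simp
  have "q x = q (inverse c *\<^sub>R (c *\<^sub>R x))" using c by simp
  also have "\<dots> \<le> inverse c * q (c *\<^sub>R x)"
    using sublinear_scaleR_le[OF assms(1), of "inverse c" "c *\<^sub>R x"] c by simp
  finally have "c * q x \<le> q (c *\<^sub>R x)" using c by (simp add: field_simps)
  then show ?thesis using sublinear_scaleR_le[OF assms(1) c, of x] by linarith
qed

lemma sublinear_neg_le: "sublinear q \<Longrightarrow> - q (- x) \<le> q x"
  using sublinear_add_le[of q x "- x"] sublinear_zero[of q] by simp

lemma sublinear_INF_chain:
  assumes Q: "Q \<noteq> {}" "\<And>q. q \<in> Q \<Longrightarrow> sublinear q"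
    and total: "\<And>q r. q \<in> Q \<Longrightarrow> r \<in> Q \<Longrightarrow> q \<le> r \<or> r \<le> q"
    and bdd: "\<And>x. bdd_below ((\<lambda>q. q x) ` Q)"
  shows "sublinear (\<lambda>x. INF q\<in>Q. q x)"
  unfolding sublinear_def
proof (intro conjI allI impI)
  fix x y
  have "(INF q\<in>Q. q (x + y)) - r y \<le> (INF q\<in>Q. q x)" if r: "r \<in> Q" for r
  proof (rule cINF_greatest[OF Q(1)])
    fix q assume q: "q \<in> Q"
    obtain m where m: "m \<in> Q" "m x \<le> q x" "m y \<le> r y"
      using total[OF q r] q r by (auto simp: le_fun_def)
    have "(INF q\<in>Q. q (x + y)) \<le> m (x + y)" using bdd m(1) by (rule cINF_lower)
    also have "\<dots> \<le> m x + m y" using Q(2)[OF m(1)] by (rule sublinear_add_le)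
    finally show "(INF q\<in>Q. q (x + y)) - r y \<le> q x" using m by linarith
  qed
  then have "(INF q\<in>Q. q (x + y)) - (INF q\<in>Q. q x) \<le> (INF q\<in>Q. q y)"
    by (intro cINF_greatest[OF Q(1)]) (simp add: algebra_simps)
  then show "(INF q\<in>Q. q (x + y)) \<le> (INF q\<in>Q. q x) + (INF q\<in>Q. q y)" by simp
next
  fix c :: real and x assume c: "0 < c"
  have "(INF q\<in>Q. q (c *\<^sub>R x)) / c \<le> (INF q\<in>Q. q x)"
  proof (rule cINF_greatest[OF Q(1)])
    fix q assume q: "q \<in> Q"
    have "(INF q\<in>Q. q (c *\<^sub>R x)) \<le> q (c *\<^sub>R x)" using bdd q by (rule cINF_lower)
    also have "\<dots> \<le> c * q x" using Q(2)[OF q] c by (rule sublinear_scaleR_le)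
    finally show "(INF q\<in>Q. q (c *\<^sub>R x)) / c \<le> q x" using c by (simp add: field_simps)
  qed
  then show "(INF q\<in>Q. q (c *\<^sub>R x)) \<le> c * (INF q\<in>Q. q x)" using c by (simp add: field_simps)
qed

lemma sublinear_minimal_below:
  assumes p: "sublinear p"
  obtains q where "sublinear q" "q \<le> p" "\<And>r. sublinear r \<Longrightarrow> r \<le> q \<Longrightarrow> r = q"
proof -
  define S where "S = {q. sublinear q \<and> q \<le> p}"
  have "\<exists>q\<in>S. \<forall>r\<in>S. r \<le> q \<longrightarrow> r = q"
  proof (rule predicate_Zorn)
    show "partial_order_on S (relation_of (\<lambda>q r. r \<le> q) S)"
      by (rule partial_order_on_relation_ofI) auto
  next
    fix C assume C: "C \<in> Chains (relation_of (\<lambda>q r. r \<le> q) S)"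
    then have CS: "C \<subseteq> S" and total: "\<And>q r. q \<in> C \<Longrightarrow> r \<in> C \<Longrightarrow> q \<le> r \<or> r \<le> q"
      by (auto simp: Chains_def relation_of_def)
    show "\<exists>u\<in>S. \<forall>q\<in>C. u \<le> q"
    proof (cases "C = {}")
      case True
      then show ?thesis using p by (auto simp: S_def)
    next
      case False
      have "bdd_below ((\<lambda>q. q x) ` C)" for x
      proof (rule bdd_belowI)
        fix v assume "v \<in> (\<lambda>q. q x) ` C"
        then obtain q where q: "q \<in> C" "v = q x" by auto
        then have "sublinear q" "q (- x) \<le> p (- x)" using CS by (auto simp: S_def le_fun_def)
        then show "- p (- x) \<le> v" using sublinear_neg_le[of q x] q(2) by linarith
      qed
      then have u: "sublinear (\<lambda>x. INF q\<in>C. q x)"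
        using False CS total by (intro sublinear_INF_chain) (auto simp: S_def)
      have u_le: "(\<lambda>x. INF q\<in>C. q x) \<le> q" if "q \<in> C" for q
        using that \<open>\<And>x. bdd_below ((\<lambda>q. q x) ` C)\<close> by (auto simp: le_fun_def intro: cINF_lower)
      obtain q0 where "q0 \<in> C" using False by blast
      then have "(\<lambda>x. INF q\<in>C. q x) \<le> p" using u_le CS by (auto simp: S_def intro: order_trans)
      then show ?thesis using u u_le by (auto simp: S_def)
    qed
  qed
  then show ?thesis using that by (auto simp: S_def intro: order_trans)
qed

text \<open>\<open>shift_along q u\<close> is a sublinear minorant of \<open>q\<close> below \<open>\<lambda>x. q (x + u) - q u\<close>,
  so a minimal sublinear functional is additive.\<close>

definition shift_along :: "('a::real_vector \<Rightarrow> real) \<Rightarrow> 'a \<Rightarrow> 'a \<Rightarrow> real" where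
  "shift_along q u x = (INF t\<in>{0..}. q (x + t *\<^sub>R u) - t * q u)"

lemma shift_along_bdd_below:
  assumes "sublinear q"
  shows "bdd_below ((\<lambda>t. q (x + t *\<^sub>R u) - t * q u) ` {0..})"
proof (rule bdd_belowI)
  fix v assume "v \<in> (\<lambda>t. q (x + t *\<^sub>R u) - t * q u) ` {0..}"
  then obtain t where t: "0 \<le> t" "v = q (x + t *\<^sub>R u) - t * q u" by auto
  have "t * q u = q ((x + t *\<^sub>R u) + - x)" using sublinear_scaleR[OF assms t(1)] by simp
  also have "\<dots> \<le> q (x + t *\<^sub>R u) + q (- x)" using assms by (rule sublinear_add_le)
  finally show "- q (- x) \<le> v" using t(2) by simp
qed

lemma shift_along_le:
  "sublinear q \<Longrightarrow> 0 \<le> t \<Longrightarrow> shift_along q u x \<le> q (x + t *\<^sub>R u) - t * q u"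
  unfolding shift_along_def by (rule cINF_lower[OF shift_along_bdd_below]) auto

lemma shift_along_greatest:
  "(\<And>t. 0 \<le> t \<Longrightarrow> c \<le> q (x + t *\<^sub>R u) - t * q u) \<Longrightarrow> c \<le> shift_along q u x"
  unfolding shift_along_def by (rule cINF_greatest) auto

lemma shift_along_le_self: "sublinear q \<Longrightarrow> shift_along q u x \<le> q x"
  using shift_along_le[of q 0 u x] by simp

lemma sublinear_shift_along:
  assumes q: "sublinear q"
  shows "sublinear (shift_along q u)"
  unfolding sublinear_def
proof (intro conjI allI impI)
  fix x y
  have "shift_along q u (x + y) - (q (y + t *\<^sub>R u) - t * q u) \<le> shift_along q u x"
    if t: "0 \<le> t" for t
  proof (rule shift_along_greatest)
    fix s :: real assume s: "0 \<le> s"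
    have "shift_along q u (x + y) \<le> q ((x + y) + (s + t) *\<^sub>R u) - (s + t) * q u"
      using shift_along_le[OF q] s t by simp
    also have "q ((x + y) + (s + t) *\<^sub>R u) \<le> q (x + s *\<^sub>R u) + q (y + t *\<^sub>R u)"
      using sublinear_add_le[OF q, of "x + s *\<^sub>R u" "y + t *\<^sub>R u"] by (simp add: algebra_simps)
    finally show "shift_along q u (x + y) - (q (y + t *\<^sub>R u) - t * q u)
        \<le> q (x + s *\<^sub>R u) - s * q u"
      by (simp add: algebra_simps)
  qed
  then have "shift_along q u (x + y) - shift_along q u x \<le> shift_along q u y"
    by (intro shift_along_greatest) (simp add: algebra_simps)
  then show "shift_along q u (x + y) \<le> shift_along q u x + shift_along q u y" by simp
next
  fix c :: real and x assume c: "0 < c"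
  have "shift_along q u (c *\<^sub>R x) / c \<le> shift_along q u x"
  proof (rule shift_along_greatest)
    fix t :: real assume t: "0 \<le> t"
    have "shift_along q u (c *\<^sub>R x) \<le> q (c *\<^sub>R x + (c * t) *\<^sub>R u) - (c * t) * q u"
      using shift_along_le[OF q] c t by simp
    also have "q (c *\<^sub>R x + (c * t) *\<^sub>R u) = c * q (x + t *\<^sub>R u)"
      using sublinear_scaleR[OF q, of c "x + t *\<^sub>R u"] c by (simp add: algebra_simps)
    finally show "shift_along q u (c *\<^sub>R x) / c \<le> q (x + t *\<^sub>R u) - t * q u"
      using c by (simp add: field_simps)
  qed
  then show "shift_along q u (c *\<^sub>R x) \<le> c * shift_along q u x" using c by (simp add: field_simps)
qed

lemma minimal_sublinear_imp_linear:
  assumes q: "sublinear q" and minimal: "\<And>r. sublinear r \<Longrightarrow> r \<le> q \<Longrightarrow> r = q"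
  shows "linear q"
proof -
  have add: "q (x + u) = q x + q u" for x u
  proof -
    have "shift_along q u = q"
      using minimal sublinear_shift_along[OF q] shift_along_le_self[OF q] by (simp add: le_fun_def)
    then have "q x \<le> q (x + 1 *\<^sub>R u) - 1 * q u" using shift_along_le[OF q, of 1 u x] by simp
    then show ?thesis using sublinear_add_le[OF q, of x u] by simp
  qed
  have neg: "q (- x) = - q x" for x using add[of x "- x"] sublinear_zero[OF q] by simp
  have "q (c *\<^sub>R x) = c * q x" for c x
  proof (cases "0 \<le> c")
    case True
    then show ?thesis by (rule sublinear_scaleR[OF q])
  next
    case False
    then have "q ((- c) *\<^sub>R x) = - c * q x" using sublinear_scaleR[OF q, of "- c"] by simp
    then show ?thesis using neg[of "(- c) *\<^sub>R x"] by simp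
  qed
  then show ?thesis using add by (intro linearI) auto
qed

theorem sublinear_dominated_linear:
  assumes p: "sublinear p"
  obtains F where "linear F" "F \<le> p" "F w = p w"
proof -
  obtain q where q: "sublinear q" "q \<le> shift_along p w" "\<And>r. sublinear r \<Longrightarrow> r \<le> q \<Longrightarrow> r = q"
    using sublinear_minimal_below[OF sublinear_shift_along[OF p]] by blast
  have lin: "linear q" using q(1,3) by (rule minimal_sublinear_imp_linear)
  have le: "q \<le> p" using q(2) shift_along_le_self[OF p] by (auto simp: le_fun_def intro: order_trans)
  have "q (- w) \<le> p (- w + 1 *\<^sub>R w) - 1 * p w"
    using q(2) shift_along_le[OF p, of 1 w "- w"] by (auto simp: le_fun_def intro: order_trans)
  then have "p w \<le> q w" using sublinear_zero[OF p] linear_neg[OF lin, of w] by simp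
  with le have "q w = p w" by (auto simp: le_fun_def intro: antisym)
  with lin le show ?thesis by (rule that)
qed

lemma sublinear_INF_translates:
  fixes M :: "'b::real_vector \<Rightarrow> 'a::real_vector"
  assumes q: "sublinear q" "\<And>w. 0 \<le> q w" and M: "linear M"
  shows "sublinear (\<lambda>w. INF x. q (w - M x))"
proof -
  have bdd: "bdd_below (range (\<lambda>x. q (w - M x)))" for w
    using q(2) by (intro bdd_belowI[of _ 0]) auto
  show ?thesis
    unfolding sublinear_def
  proof (intro conjI allI impI)
    fix w1 w2
    have "(INF x. q (w1 + w2 - M x)) - q (w2 - M x2) \<le> (INF x. q (w1 - M x))" for x2
    proof (rule cINF_greatest)
      fix x1
      have "(INF x. q (w1 + w2 - M x)) \<le> q ((w1 - M x1) + (w2 - M x2))"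
        using cINF_lower[OF bdd, of "x1 + x2"] linear_add[OF M] by (simp add: algebra_simps)
      also have "\<dots> \<le> q (w1 - M x1) + q (w2 - M x2)" using q(1) by (rule sublinear_add_le)
      finally show "(INF x. q (w1 + w2 - M x)) - q (w2 - M x2) \<le> q (w1 - M x1)" by simp
    qed simp
    then have "(INF x. q (w1 + w2 - M x)) - (INF x. q (w1 - M x)) \<le> (INF x. q (w2 - M x))"
      by (intro cINF_greatest) (auto simp: algebra_simps)
    then show "(INF x. q (w1 + w2 - M x)) \<le> (INF x. q (w1 - M x)) + (INF x. q (w2 - M x))"
      by simp
  next
    fix c :: real and w assume c: "0 < c"
    have "(INF x. q (c *\<^sub>R w - M x)) / c \<le> (INF x. q (w - M x))"
    proof (rule cINF_greatest)
      fix x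
      have "(INF x. q (c *\<^sub>R w - M x)) \<le> q (c *\<^sub>R w - M (c *\<^sub>R x))"
        using bdd by (rule cINF_lower) simp
      also have "\<dots> = c * q (w - M x)"
        using sublinear_scaleR[OF q(1), of c "w - M x"] c linear_scale[OF M]
        by (simp add: algebra_simps)
      finally show "(INF x. q (c *\<^sub>R w - M x)) / c \<le> q (w - M x)"
        using c by (simp add: field_simps)
    qed simp
    then show "(INF x. q (c *\<^sub>R w - M x)) \<le> c * (INF x. q (w - M x))"
      using c by (simp add: field_simps)
  qed
qed


section \<open>Duality for norms on the nonnegative quadrant\<close>

lemma scaled_norm_blinfun_le:
  fixes l :: "'a::real_normed_vector \<Rightarrow>\<^sub>L real"
  assumes s: "0 \<le> s" and bound: "\<And>y. norm y \<le> 1 \<Longrightarrow> s * l y \<le> K"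
  shows "s * norm l \<le> K"
proof (cases "s = 0")
  case True
  then show ?thesis using bound[of 0] by simp
next
  case False
  with s have s: "0 < s" by simp
  have unit: "\<bar>l u\<bar> \<le> K / s" if "norm u \<le> 1" for u
    using bound[of u] bound[of "- u"] that s by (auto simp: blinfun.minus_right field_simps)
  have "norm l \<le> K / s"
  proof (rule norm_blinfun_bound)
    show "0 \<le> K / s" using unit[of 0] by simp
  next
    fix y
    show "norm (l y) \<le> K / s * norm y"
    proof (cases "y = 0")
      case False
      have "l y = norm y * l (y /\<^sub>R norm y)" using False by (simp add: blinfun.scaleR_right)
      then show ?thesis
        using mult_left_mono[OF unit[of "y /\<^sub>R norm y"], of "norm y"] False
        by (simp add: abs_mult mult.commute)
    qed simp
  qed
  then show ?thesis using s by (simp add: field_simps)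
qed

text \<open>\<open>in_dual_ball N a b\<close> says that \<open>(a, b)\<close> lies in the unit ball of the norm dual to \<open>N\<close>.\<close>

definition in_dual_ball :: "(real \<Rightarrow> real \<Rightarrow> real) \<Rightarrow> real \<Rightarrow> real \<Rightarrow> bool" where
  "in_dual_ball N a b \<longleftrightarrow> (\<forall>s t. 0 \<le> s \<longrightarrow> 0 \<le> t \<longrightarrow> s * a + t * b \<le> N s t)"

locale quadrant_norm =
  fixes N :: "real \<Rightarrow> real \<Rightarrow> real"
  assumes mono: "\<And>a b a' b'. 0 \<le> a \<Longrightarrow> 0 \<le> b \<Longrightarrow> a \<le> a' \<Longrightarrow> b \<le> b' \<Longrightarrow> N a b \<le> N a' b'"
    and subadditive: "\<And>a b a' b'. 0 \<le> a \<Longrightarrow> 0 \<le> b \<Longrightarrow> 0 \<le> a' \<Longrightarrow> 0 \<le> b' \<Longrightarrow>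
      N (a + a') (b + b') \<le> N a b + N a' b'"
    and homogeneous: "\<And>k a b. 0 \<le> k \<Longrightarrow> 0 \<le> a \<Longrightarrow> 0 \<le> b \<Longrightarrow> N (k * a) (k * b) = k * N a b"
begin

lemma zero: "N 0 0 = 0"
  using homogeneous[of 0 0 0] by simp

lemma nonneg: "0 \<le> a \<Longrightarrow> 0 \<le> b \<Longrightarrow> 0 \<le> N a b"
  using mono[of 0 0 a b] zero by simp

lemma sublinear_norm_pair:
  "sublinear (\<lambda>w :: 'a::real_normed_vector \<times> 'b::real_normed_vector. N (norm (fst w)) (norm (snd w)))"
  unfolding sublinear_def
proof (intro conjI allI impI)
  fix w1 w2 :: "'a \<times> 'b"
  have "N (norm (fst (w1 + w2))) (norm (snd (w1 + w2)))
      \<le> N (norm (fst w1) + norm (fst w2)) (norm (snd w1) + norm (snd w2))"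
    by (intro mono) (auto intro: norm_triangle_ineq)
  also have "\<dots> \<le> N (norm (fst w1)) (norm (snd w1)) + N (norm (fst w2)) (norm (snd w2))"
    by (intro subadditive) auto
  finally show "N (norm (fst (w1 + w2))) (norm (snd (w1 + w2)))
      \<le> N (norm (fst w1)) (norm (snd w1)) + N (norm (fst w2)) (norm (snd w2))" .
next
  fix c :: real and w :: "'a \<times> 'b" assume "0 < c"
  then show "N (norm (fst (c *\<^sub>R w))) (norm (snd (c *\<^sub>R w))) \<le> c * N (norm (fst w)) (norm (snd w))"
    using homogeneous[of c "norm (fst w)" "norm (snd w)"] by simp
qed

lemma dual_pairing_le:
  fixes A :: "'x::real_normed_vector \<Rightarrow>\<^sub>L 'y::real_normed_vector"
    and B :: "'x \<Rightarrow>\<^sub>L 'z::real_normed_vector"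
  assumes lm: "in_dual_ball N (norm l) (norm m)" and adj: "adjoint_op A l + adjoint_op B m = 0"
  shows "\<bar>pairing y0 l\<bar> \<le> N (norm (y0 - A x)) (norm (B x))"
proof -
  have "l (A x) + m (B x) = 0"
    using arg_cong[OF adj, of "\<lambda>f. blinfun_apply f x"] by (simp add: adjoint_op_def plus_blinfun.rep_eq)
  then have "\<bar>pairing y0 l\<bar> \<le> \<bar>l (y0 - A x)\<bar> + \<bar>m (B x)\<bar>"
    by (simp add: pairing_def blinfun.diff_right)
  also have "\<dots> \<le> norm (y0 - A x) * norm l + norm (B x) * norm m"
    using norm_blinfun[of l "y0 - A x"] norm_blinfun[of m "B x"] by (simp add: mult.commute)
  also have "\<dots> \<le> N (norm (y0 - A x)) (norm (B x))"
    using lm by (simp add: in_dual_ball_def)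
  finally show ?thesis .
qed

lemma dominated_functional_split:
  fixes F :: "'a::real_normed_vector \<times> 'b::real_normed_vector \<Rightarrow> real"
  assumes F: "linear F" "\<And>y z. F (y, z) \<le> N (norm y) (norm z)"
  obtains l :: "'a \<Rightarrow>\<^sub>L real" and m :: "'b \<Rightarrow>\<^sub>L real"
    where "\<And>y z. F (y, z) = l y + m z" "in_dual_ball N (norm l) (norm m)"
proof -
  have bound: "\<bar>F (y, z)\<bar> \<le> N (norm y) (norm z)" for y z
    using F(2)[of y z] F(2)[of "- y" "- z"] linear_neg[OF F(1), of "(y, z)"] by auto
  have "bounded_linear (\<lambda>y. F (y, 0))"
  proof (rule bounded_linear_intro[where K = "N 1 0"])
    show "F (y1 + y2, 0) = F (y1, 0) + F (y2, 0)" for y1 y2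
      using linear_add[OF F(1), of "(y1, 0)" "(y2, 0)"] by simp
    show "F (r *\<^sub>R y, 0) = r *\<^sub>R F (y, 0)" for r y
      using linear_scale[OF F(1), of r "(y, 0)"] by simp
    show "norm (F (y, 0)) \<le> norm y * N 1 0" for y
      using bound[of y 0] homogeneous[of "norm y" 1 0] by simp
  qed
  moreover have "bounded_linear (\<lambda>z. F (0, z))"
  proof (rule bounded_linear_intro[where K = "N 0 1"])
    show "F (0, z1 + z2) = F (0, z1) + F (0, z2)" for z1 z2
      using linear_add[OF F(1), of "(0, z1)" "(0, z2)"] by simp
    show "F (0, r *\<^sub>R z) = r *\<^sub>R F (0, z)" for r z
      using linear_scale[OF F(1), of r "(0, z)"] by simp
    show "norm (F (0, z)) \<le> norm z * N 0 1" for z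
      using bound[of 0 z] homogeneous[of "norm z" 0 1] by simp
  qed
  ultimately obtain l :: "'a \<Rightarrow>\<^sub>L real" and m :: "'b \<Rightarrow>\<^sub>L real"
    where l: "\<And>y. l y = F (y, 0)" and m: "\<And>z. m z = F (0, z)"
    by (metis bounded_linear_Blinfun_apply)
  have split: "F (y, z) = l y + m z" for y z
    using linear_add[OF F(1), of "(y, 0)" "(0, z)"] by (simp add: l m)
  have "in_dual_ball N (norm l) (norm m)"
    unfolding in_dual_ball_def
  proof (intro allI impI)
    fix s t :: real assume s: "0 \<le> s" and t: "0 \<le> t"
    have unit: "s * l y + t * m z \<le> N s t" if "norm y \<le> 1" "norm z \<le> 1" for y z
    proof -
      have "s * l y + t * m z = F (s *\<^sub>R y, t *\<^sub>R z)"
        by (simp add: split blinfun.scaleR_right)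
      also have "\<dots> \<le> N (s * norm y) (t * norm z)" using F(2)[of "s *\<^sub>R y" "t *\<^sub>R z"] s t by simp
      also have "\<dots> \<le> N s t" using that s t by (intro mono) (auto simp: mult_left_le)
      finally show ?thesis .
    qed
    have "t * m z \<le> N s t - s * norm l" if "norm z \<le> 1" for z
      using scaled_norm_blinfun_le[OF s, of l "N s t - t * m z"] unit[OF _ that] by fastforce
    then have "t * norm m \<le> N s t - s * norm l"
      using scaled_norm_blinfun_le[OF t] by blast
    then show "s * norm l + t * norm m \<le> N s t" by simp
  qed
  with split show ?thesis by (rule that)
qed

theorem inf_residual_eq_max_dual:
  fixes A :: "'x::real_normed_vector \<Rightarrow>\<^sub>L 'y::real_normed_vector"
    and B :: "'x \<Rightarrow>\<^sub>L 'z::real_normed_vector"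
  shows "Inf {N (norm (y0 - A x)) (norm (B x)) | x. True}
       = Sup {\<bar>pairing y0 l\<bar> | l m. in_dual_ball N (norm l) (norm m) \<and>
                adjoint_op A l + adjoint_op B m = 0}"
    (is "Inf ?I = Sup ?S")
proof -
  define q :: "'y \<times> 'z \<Rightarrow> real" where "q w = N (norm (fst w)) (norm (snd w))" for w
  define M :: "'x \<Rightarrow> 'y \<times> 'z" where "M x = (A x, B x)" for x
  define v where "v w = (INF x. q (w - M x))" for w
  have q_nonneg: "0 \<le> q w" for w by (simp add: q_def nonneg)
  have "sublinear q"
    unfolding q_def by (rule sublinear_norm_pair)
  have "linear M"
    unfolding M_def by (intro bounded_linear.linear bounded_linear_Pair blinfun.bounded_linear_right)
  have "sublinear v"
    unfolding v_def using \<open>sublinear q\<close> q_nonneg \<open>linear M\<close> by (rule sublinear_INF_translates)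
  then obtain F where F: "linear F" "F \<le> v" "F (y0, 0) = v (y0, 0)"
    by (rule sublinear_dominated_linear)
  have v_le: "v w \<le> q (w - M x)" for w x
    unfolding v_def by (intro cINF_lower bdd_belowI[of _ 0]) (auto intro: q_nonneg)
  have F_le: "F w \<le> q w" for w
    using le_funD[OF F(2), of w] v_le[of w 0] linear_0[OF \<open>linear M\<close>] by simp
  have "F (M x) \<le> 0" for x
    using le_funD[OF F(2), of "M x"] v_le[of "M x" x] by (simp add: q_def zero)
  then have F_M: "F (M x) = 0" for x
    using linear_neg[OF F(1), of "M x"] linear_neg[OF \<open>linear M\<close>, of x]
    by (metis neg_le_0_iff_le order_antisym)
  obtain l :: "'y \<Rightarrow>\<^sub>L real" and m :: "'z \<Rightarrow>\<^sub>L real"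
    where lm: "\<And>y z. F (y, z) = l y + m z" "in_dual_ball N (norm l) (norm m)"
    using dominated_functional_split[OF F(1)] F_le[of "(_, _)"] by (auto simp: q_def)
  have adj: "adjoint_op A l + adjoint_op B m = 0"
    using F_M lm(1) by (intro blinfun_eqI) (simp add: adjoint_op_def plus_blinfun.rep_eq M_def)
  have "?I = range (\<lambda>x. q ((y0, 0) - M x))"
    by (auto simp: q_def M_def)
  then have "Inf ?I = F (y0, 0)"
    using F(3) by (simp add: v_def)
  moreover have "0 \<le> Inf ?I"
    by (rule cInf_greatest) (auto intro: nonneg)
  ultimately have "Inf ?I = \<bar>pairing y0 l\<bar>"
    using lm(1)[of y0 0] by (simp add: pairing_def)
  with lm(2) adj have "Inf ?I \<in> ?S" by blast
  moreover have "s \<le> Inf ?I" if "s \<in> ?S" for s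
    using that dual_pairing_le by (intro cInf_greatest) fastforce+
  ultimately show ?thesis
    by (intro cSup_eq_maximum[symmetric])
qed

end


section \<open>The sum norm and the \<open>p\<close>-norms on the quadrant\<close>

lemma quadrant_norm_plus: "quadrant_norm (+)"
  by unfold_locales (auto simp: algebra_simps)

lemma in_dual_ball_plus_iff: "in_dual_ball (+) a b \<longleftrightarrow> max a b \<le> 1"
proof
  assume "in_dual_ball (+) a b"
  then have "1 * a + 0 * b \<le> 1 + 0" "0 * a + 1 * b \<le> 0 + 1"
    unfolding in_dual_ball_def by (blast intro: zero_le_one order_refl)+
  then show "max a b \<le> 1" by simp
next
  assume "max a b \<le> 1"
  then show "in_dual_ball (+) a b"
    unfolding in_dual_ball_def by (auto intro!: add_mono mult_left_le)
qed

definition pnorm2 :: "real \<Rightarrow> real \<Rightarrow> real \<Rightarrow> real" where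
  "pnorm2 p a b = (a powr p + b powr p) powr (1 / p)"

lemma pnorm2_nonneg: "0 \<le> pnorm2 p a b"
  by (simp add: pnorm2_def)

lemma pnorm2_eq_0_iff: "pnorm2 p a b = 0 \<longleftrightarrow> a = 0 \<and> b = 0"
  by (simp add: pnorm2_def add_nonneg_eq_0_iff)

lemma pnorm2_normalized:
  assumes "p \<noteq> 0" "0 \<le> a" "0 \<le> b" "pnorm2 p a b \<noteq> 0"
  shows "(a / pnorm2 p a b) powr p + (b / pnorm2 p a b) powr p = 1"
proof -
  have "pnorm2 p a b powr p = a powr p + b powr p"
    using assms(1) by (simp add: pnorm2_def powr_powr)
  moreover have "a powr p + b powr p \<noteq> 0"
    using assms(4) by (auto simp: pnorm2_def)
  ultimately show ?thesis
    using assms by (simp add: powr_divide pnorm2_nonneg add_divide_distrib[symmetric])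
qed

lemma pnorm2_Holder:
  assumes pq: "1 < p" "1 < q" "1 / p + 1 / q = 1"
    and nonneg: "0 \<le> s" "0 \<le> t" "0 \<le> a" "0 \<le> b"
  shows "s * a + t * b \<le> pnorm2 q s t * pnorm2 p a b"
proof (cases "pnorm2 q s t = 0 \<or> pnorm2 p a b = 0")
  case True
  then have "s * a + t * b = 0" by (auto simp: pnorm2_eq_0_iff)
  with True show ?thesis by auto
next
  case False
  define S where "S = pnorm2 q s t"
  define T where "T = pnorm2 p a b"
  have S: "0 < S" and T: "0 < T"
    using False pnorm2_nonneg unfolding S_def T_def by (auto simp: order_less_le)
  have "(s / S) * (a / T) + (t / S) * (b / T)
      \<le> ((a / T) powr p / p + (s / S) powr q / q) + ((b / T) powr p / p + (t / S) powr q / q)"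
    using Youngs_inequality[OF pq, of "a / T" "s / S"] Youngs_inequality[OF pq, of "b / T" "t / S"]
      nonneg S T by (simp add: mult.commute)
  also have "\<dots> = ((a / T) powr p + (b / T) powr p) / p + ((s / S) powr q + (t / S) powr q) / q"
    by (simp add: add_divide_distrib)
  also have "\<dots> = 1"
    using pnorm2_normalized[of p a b] pnorm2_normalized[of q s t] False pq nonneg
    unfolding S_def T_def by simp
  finally have "(s * a + t * b) / (S * T) \<le> 1"
    by (simp add: add_divide_distrib)
  then show ?thesis
    using S T unfolding S_def T_def by (simp add: divide_le_eq mult.commute)
qed

text \<open>Equality in Hoelder's inequality is attained at \<open>s = (a / \<parallel>(a, b)\<parallel>\<^sub>p) powr (p - 1)\<close>,
  \<open>t = (b / \<parallel>(a, b)\<parallel>\<^sub>p) powr (p - 1)\<close>.\<close>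

lemma pnorm2_Holder_attained:
  assumes pq: "1 < p" "1 < q" "1 / p + 1 / q = 1" and nonneg: "0 \<le> a" "0 \<le> b"
  obtains s t where "0 \<le> s" "0 \<le> t" "pnorm2 q s t \<le> 1" "s * a + t * b = pnorm2 p a b"
proof (cases "pnorm2 p a b = 0")
  case True
  then show ?thesis using that[of 0 0] by (simp add: pnorm2_def)
next
  case False
  define T where "T = pnorm2 p a b"
  have T: "0 < T" using False pnorm2_nonneg unfolding T_def by (auto simp: order_less_le)
  have pq': "(p - 1) * q = p" using pq by (simp add: field_simps)
  have attain: "(u / T) powr (p - 1) * u = T * (u / T) powr p" if "0 \<le> u" for u
  proof (cases "u = 0")
    case False
    have "(u / T) powr p = (u / T) powr (p - 1) * (u / T) powr 1"
      by (metis powr_add diff_add_cancel)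
    then show ?thesis using False that T by simp
  qed (use pq in simp)
  have "pnorm2 q ((a / T) powr (p - 1)) ((b / T) powr (p - 1)) = 1"
    using pnorm2_normalized[of p a b] False pq nonneg
    by (simp add: pnorm2_def powr_powr pq' T_def)
  moreover have "(a / T) powr (p - 1) * a + (b / T) powr (p - 1) * b = T"
    using attain[OF nonneg(1)] attain[OF nonneg(2)] pnorm2_normalized[of p a b] False pq nonneg
    by (simp add: T_def flip: distrib_left)
  ultimately show ?thesis
    using that[of "(a / T) powr (p - 1)" "(b / T) powr (p - 1)"] by (simp add: T_def)
qed

lemma quadrant_norm_pnorm2:
  assumes p: "1 < p"
  shows "quadrant_norm (pnorm2 p)"
proof
  define q where "q = p / (p - 1)"
  have pq: "1 < p" "1 < q" "1 / p + 1 / q = 1"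
    using p by (auto simp: q_def field_simps)
  fix a b a' b' :: real
  assume nonneg: "0 \<le> a" "0 \<le> b" "0 \<le> a'" "0 \<le> b'"
  obtain s t where st: "0 \<le> s" "0 \<le> t" "pnorm2 q s t \<le> 1"
    "s * (a + a') + t * (b + b') = pnorm2 p (a + a') (b + b')"
    using pnorm2_Holder_attained[OF pq, of "a + a'" "b + b'"] nonneg by auto
  have "pnorm2 p (a + a') (b + b') = (s * a + t * b) + (s * a' + t * b')"
    using st(4) by (simp add: algebra_simps)
  also have "\<dots> \<le> pnorm2 q s t * pnorm2 p a b + pnorm2 q s t * pnorm2 p a' b'"
    using pnorm2_Holder[OF pq] st nonneg by (intro add_mono) auto
  also have "\<dots> \<le> pnorm2 p a b + pnorm2 p a' b'"
    using st(3) pnorm2_nonneg[of q s t] pnorm2_nonneg[of p a b] pnorm2_nonneg[of p a' b']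
    by (intro add_mono mult_left_le_one_le) auto
  finally show "pnorm2 p (a + a') (b + b') \<le> pnorm2 p a b + pnorm2 p a' b'" .
next
  fix a b a' b' :: real
  assume "0 \<le> a" "0 \<le> b" "a \<le> a'" "b \<le> b'"
  then show "pnorm2 p a b \<le> pnorm2 p a' b'"
    unfolding pnorm2_def using p by (intro powr_mono2 add_mono) auto
next
  fix k a b :: real
  assume "0 \<le> k" "0 \<le> a" "0 \<le> b"
  then have "((k * a) powr p + (k * b) powr p) powr (1 / p)
      = ((k powr p) * (a powr p + b powr p)) powr (1 / p)"
    by (simp add: powr_mult distrib_left)
  also have "\<dots> = (k powr p) powr (1 / p) * (a powr p + b powr p) powr (1 / p)"
    by (simp add: powr_mult)
  also have "(k powr p) powr (1 / p) = k"
    using p \<open>0 \<le> k\<close> by (simp add: powr_powr)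
  finally show "pnorm2 p (k * a) (k * b) = k * pnorm2 p a b"
    by (simp add: pnorm2_def)
qed

lemma in_dual_ball_pnorm2_iff:
  assumes pq: "1 < p" "1 < q" "1 / p + 1 / q = 1" and nonneg: "0 \<le> a" "0 \<le> b"
  shows "in_dual_ball (pnorm2 p) a b \<longleftrightarrow> pnorm2 q a b \<le> 1"
proof
  assume ball: "in_dual_ball (pnorm2 p) a b"
  have "1 / q + 1 / p = 1" using pq by simp
  then obtain s t where st: "0 \<le> s" "0 \<le> t" "pnorm2 p s t \<le> 1" "s * a + t * b = pnorm2 q a b"
    using pnorm2_Holder_attained[OF pq(2,1) _ nonneg] by blast
  moreover have "s * a + t * b \<le> pnorm2 p s t"
    using ball st(1,2) unfolding in_dual_ball_def by blast
  ultimately show "pnorm2 q a b \<le> 1" by linarith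
next
  assume "pnorm2 q a b \<le> 1"
  then have "s * a + t * b \<le> pnorm2 p s t" if "0 \<le> s" "0 \<le> t" for s t
    using pnorm2_Holder[OF pq nonneg that]
      mult_left_le_one_le[OF pnorm2_nonneg pnorm2_nonneg \<open>pnorm2 q a b \<le> 1\<close>, of p s t]
    by (simp add: mult.commute)
  then show "in_dual_ball (pnorm2 p) a b"
    unfolding in_dual_ball_def by blast
qed

lemma adjoint_op_scaleR: "adjoint_op (c *\<^sub>R T) l = c *\<^sub>R adjoint_op T l"
  by (rule blinfun_eqI) (simp add: adjoint_op_def scaleR_blinfun.rep_eq blinfun.scaleR_right)


theorem theorem3p4:
  fixes A :: "'x::banach \<Rightarrow>\<^sub>L 'y::banach"
    and B :: "'x \<Rightarrow>\<^sub>L 'z::banach"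
    and y0 :: 'y
    and \<rho> :: real
  assumes "\<rho> > 0"
  shows "Inf {norm (y0 - A x) + \<rho> * norm (B x) | x. True}
           = Sup {\<bar>pairing y0 l\<bar> | l m.
                    max (norm l) (norm m) \<le> 1 \<and>
                    adjoint_op A l + \<rho> *\<^sub>R adjoint_op B m = 0}
       \<and> (\<forall>p p' :: real. 1 < p \<and> 1 < p' \<and> 1 / p + 1 / p' = 1 \<longrightarrow>
            Inf {(norm (y0 - A x) powr p + \<rho> * norm (B x) powr p) powr (1 / p) | x. True}
              = Sup {\<bar>pairing y0 l\<bar> | l m.
                    (norm l powr p' + norm m powr p') powr (1 / p') \<le> 1 \<and>
                    adjoint_op A l + (\<rho> powr (1 / p)) *\<^sub>R adjoint_op B m = 0})"
proof (intro conjI allI impI)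
  show "Inf {norm (y0 - A x) + \<rho> * norm (B x) | x. True}
      = Sup {\<bar>pairing y0 l\<bar> | l m. max (norm l) (norm m) \<le> 1 \<and>
               adjoint_op A l + \<rho> *\<^sub>R adjoint_op B m = 0}"
    using quadrant_norm.inf_residual_eq_max_dual[OF quadrant_norm_plus, of y0 A "\<rho> *\<^sub>R B"] assms
    by (simp add: in_dual_ball_plus_iff adjoint_op_scaleR scaleR_blinfun.rep_eq)
next
  fix p p' :: real
  assume "1 < p \<and> 1 < p' \<and> 1 / p + 1 / p' = 1"
  then have pp': "1 < p" "1 < p'" "1 / p + 1 / p' = 1" by auto
  have "norm ((\<rho> powr (1 / p) *\<^sub>R B) x) powr p = \<rho> * norm (B x) powr p" for x
    using assms pp'(1) by (simp add: scaleR_blinfun.rep_eq powr_mult powr_powr)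
  then show "Inf {(norm (y0 - A x) powr p + \<rho> * norm (B x) powr p) powr (1 / p) | x. True}
      = Sup {\<bar>pairing y0 l\<bar> | l m. (norm l powr p' + norm m powr p') powr (1 / p') \<le> 1 \<and>
               adjoint_op A l + (\<rho> powr (1 / p)) *\<^sub>R adjoint_op B m = 0}"
    using quadrant_norm.inf_residual_eq_max_dual[OF quadrant_norm_pnorm2[OF pp'(1)],
        of y0 A "\<rho> powr (1 / p) *\<^sub>R B"]
    by (simp add: pnorm2_def in_dual_ball_pnorm2_iff[OF pp'] adjoint_op_scaleR scaleR_blinfun.rep_eq)
qed

end
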